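(* Let $\Phi=(A;A^*;\{E_i\}_{i=0}^d;\{E^*_i\}_{i=0}^d)$ be a Leonard system in $\mathcal A$ with eigenvalue sequence $\theta_0,\dots,\theta_d$, dual eigenvalue sequence $\theta^*_0,\dots,\theta^*_d$, first split sequence $\varphi_1,\dots,\varphi_d$ and second split sequence $\phi_1,\dots,\phi_d$, and let $k_i=\nu\,\mathrm{tr}(E^*_iE_0)$. Then $$k_i=\frac{\varphi_1\varphi_2\cdots\varphi_i}{\phi_1\phi_2\cdots\phi_i}\cdot\frac{\eta^*_d(\theta^*_0)}{\tau^*_i(\theta^*_i)\,\eta^*_{d-i}(\theta^*_i)}\qquad(0\le i\le d).$$
   Context: Let $\mathbb K$ be a field, $d\ge 0$ an integer, and $\mathcal A$ a $\mathbb K$-algebra isomorphic to the full matrix algebra $\mathrm{Mat}_{d+1}(\mathbb K)$; $I$ is its identity. An element of $\mathcal A$ is multiplicity-free if it has $d+1$ mutually distinct eigenvalues in $\mathbb K$. If $A$ is multiplicity-free with eigenvalues $\theta_0,\dots,\theta_d$, the primitive idempotent of $A$ associated with $\theta_i$ is $E_i=\prod_{j\ne i}(A-\theta_jI)/(\theta_i-\theta_j)$. A Leonard system in $\mathcal A$ is a sequence $\Phi=(A;A^*;\{E_i\}_{i=0}^d;\{E^*_i\}_{i=0}^d)$ such that (i) $A,A^*\in\mathcal A$ are multiplicity-free; (ii) $E_0,\dots,E_d$ is an ordering of the primitive idempotents of $A$; (iii) $E^*_0,\dots,E^*_d$ is an ordering of the primitive idempotents of $A^*$; (iv) $E_iA^*E_j=0$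 if $|i-j|>1$ and $E_iA^*E_j\ne0$ if $|i-j|=1$ ($0\le i,j\le d$); (v) $E^*_iAE^*_j=0$ if $|i-j|>1$ and $E^*_iAE^*_j\ne0$ if $|i-j|=1$ ($0\le i,j\le d$). Here $A^*$ is merely notation (not an adjoint). $\theta_i$ (resp. $\theta^*_i$) is the eigenvalue of $A$ (resp. $A^*$) associated with $E_i$ (resp. $E^*_i$). The scalar $\mathrm{tr}(E_0E^*_0)$ is nonzero and $\nu$ is its inverse. First split sequence of a Leonard system $\Psi=(B;B^*;\{F_i\};\{F^*_i\})$ with eigenvalues $\sigma_i$ (for $F_i$) and dual eigenvalues $\sigma^*_i$ (for $F^*_i$): on an irreducible module $V$, $U_i=(F^*_0V+\cdots+F^*_iV)\cap(F_iV+\cdots+F_dV)$ is $1$-dimensional and, for $1\le i\le d$, an eigenspace of $(B-\sigma_{i-1}I)(B^*-\sigma^*_iI)$ with nonzero eigenvalue, denoted $\varphi_i(\Psi)$. The first split sequence of $\Phi$ is $\varphi_i=\varphi_i(\Phi)$; the second split sequence is $\phi_i=\varphi_i(\Phi^{\Downarrow})$, where $\Phi^{\Downarrow}=(A;A^*;\{E_{d-i}\}_{i=0}^d;\{E^*_i\}_{i=0}^d)$ (also a Leonard system). Polynomials: $\tau^*_i=\prod_{h=0}^{i-1}(\lambda-\theta^*_h)$, $\eta^*_i=\prod_{h=0}^{i-1}(\lambda-\theta^*_{d-h})$ (empty products $=1$). *)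

theory Defs
  imports "Jordan_Normal_Form.Char_Poly"
begin

text \<open>We realise the algebra isomorphic to Mat_{d+1}(K) as the full matrix algebra
  of (d+1) x (d+1) matrices over the field K, acting on its irreducible module K^(d+1).\<close>

definition mtrace :: "'a::comm_ring_1 mat \<Rightarrow> 'a" where
  "mtrace M = (\<Sum>i<dim_row M. M $$ (i, i))"

definition multiplicity_free :: "nat \<Rightarrow> 'a::field mat \<Rightarrow> bool" where
  "multiplicity_free d A \<longleftrightarrow> A \<in> carrier_mat (Suc d) (Suc d) \<and>
     finite {k. eigenvalue A k} \<and> card {k. eigenvalue A k} = Suc d"

definition prim_idem :: "nat \<Rightarrow> 'a::field mat \<Rightarrow> (nat \<Rightarrow> 'a) \<Rightarrow> nat \<Rightarrow> 'a mat" where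
  "prim_idem d A th i =
     foldr (\<lambda>j M. ((1 / (th i - th j)) \<cdot>\<^sub>m (A - th j \<cdot>\<^sub>m 1\<^sub>m (Suc d))) * M)
       (filter (\<lambda>j. j \<noteq> i) [0..<Suc d]) (1\<^sub>m (Suc d))"

definition eigen_ordering :: "nat \<Rightarrow> 'a::field mat \<Rightarrow> (nat \<Rightarrow> 'a) \<Rightarrow> bool" where
  "eigen_ordering d A th \<longleftrightarrow> inj_on th {..d} \<and> th ` {..d} = {k. eigenvalue A k}"

text \<open>Leonard system (A; As; {E_i}; {Es_i}) where E_i (resp. Es_i) is the primitive
  idempotent of A (resp. As) for the eigenvalue th_i (resp. ths_i).\<close>
definition leonard_system ::
  "nat \<Rightarrow> 'a::field mat \<Rightarrow> 'a mat \<Rightarrow> (nat \<Rightarrow> 'a) \<Rightarrow> (nat \<Rightarrow> 'a) \<Rightarrow> bool" where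
  "leonard_system d A As th ths \<longleftrightarrow>
     multiplicity_free d A \<and> multiplicity_free d As \<and>
     eigen_ordering d A th \<and> eigen_ordering d As ths \<and>
     (\<forall>i\<le>d. \<forall>j\<le>d.
        (Suc i < j \<or> Suc j < i \<longrightarrow>
           prim_idem d A th i * As * prim_idem d A th j = 0\<^sub>m (Suc d) (Suc d)) \<and>
        (Suc i = j \<or> Suc j = i \<longrightarrow>
           prim_idem d A th i * As * prim_idem d A th j \<noteq> 0\<^sub>m (Suc d) (Suc d)) \<and>
        (Suc i < j \<or> Suc j < i \<longrightarrow>
           prim_idem d As ths i * A * prim_idem d As ths j = 0\<^sub>m (Suc d) (Suc d)) \<and>
        (Suc i = j \<or> Suc j = i \<longrightarrow>
           prim_idem d As ths i * A * prim_idem d As ths j \<noteq> 0\<^sub>m (Suc d) (Suc d)))"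

definition subspace_sum :: "nat \<Rightarrow> (nat \<Rightarrow> 'a::field mat) \<Rightarrow> nat set \<Rightarrow> 'a vec set" where
  "subspace_sum d F H = {v. \<exists>w. (\<forall>h\<in>H. w h \<in> carrier_vec (Suc d)) \<and>
       v = finsum_vec TYPE('a) (Suc d) (\<lambda>h. F h *\<^sub>v w h) H}"

definition split_U :: "nat \<Rightarrow> 'a::field mat \<Rightarrow> 'a mat \<Rightarrow> (nat \<Rightarrow> 'a) \<Rightarrow> (nat \<Rightarrow> 'a) \<Rightarrow> nat \<Rightarrow> 'a vec set" where
  "split_U d B Bs sg sgs i =
     subspace_sum d (prim_idem d Bs sgs) {0..i} \<inter> subspace_sum d (prim_idem d B sg) {i..d}"

definition split_val :: "nat \<Rightarrow> 'a::field mat \<Rightarrow> 'a mat \<Rightarrow> (nat \<Rightarrow> 'a) \<Rightarrow> (nat \<Rightarrow> 'a) \<Rightarrow> nat \<Rightarrow> 'a" where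
  "split_val d B Bs sg sgs i =
     (THE c. \<forall>u\<in>split_U d B Bs sg sgs i.
        ((B - sg (i - 1) \<cdot>\<^sub>m 1\<^sub>m (Suc d)) * (Bs - sgs i \<cdot>\<^sub>m 1\<^sub>m (Suc d))) *\<^sub>v u = c \<cdot>\<^sub>v u)"

definition first_split :: "nat \<Rightarrow> 'a::field mat \<Rightarrow> 'a mat \<Rightarrow> (nat \<Rightarrow> 'a) \<Rightarrow> (nat \<Rightarrow> 'a) \<Rightarrow> nat \<Rightarrow> 'a" where
  "first_split d A As th ths i = split_val d A As th ths i"

text \<open>Second split sequence: first split sequence of Phi-Down, whose eigenvalue
  sequence is th_{d-i} (idempotents E_{d-i}).\<close>
definition second_split :: "nat \<Rightarrow> 'a::field mat \<Rightarrow> 'a mat \<Rightarrow> (nat \<Rightarrow> 'a) \<Rightarrow> (nat \<Rightarrow> 'a) \<Rightarrow> nat \<Rightarrow> 'a" where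
  "second_split d A As th ths i = split_val d A As (\<lambda>j. th (d - j)) ths i"

definition tau_star :: "(nat \<Rightarrow> 'a::field) \<Rightarrow> nat \<Rightarrow> 'a \<Rightarrow> 'a" where
  "tau_star ths i x = (\<Prod>h<i. x - ths h)"

definition eta_star :: "nat \<Rightarrow> (nat \<Rightarrow> 'a::field) \<Rightarrow> nat \<Rightarrow> 'a \<Rightarrow> 'a" where
  "eta_star d ths i x = (\<Prod>h<i. x - ths (d - h))"

definition nu_LS :: "nat \<Rightarrow> 'a::field mat \<Rightarrow> 'a mat \<Rightarrow> (nat \<Rightarrow> 'a) \<Rightarrow> (nat \<Rightarrow> 'a) \<Rightarrow> 'a" where
  "nu_LS d A As th ths = 1 / mtrace (prim_idem d A th 0 * prim_idem d As ths 0)"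

end

theory Submission
  imports Defs
begin

(* Let x_j and y_j be eigenvectors of A and A* for th_j and ths_j. Since E_0 and E*_i are rank-one
   projections, tr(E*_i E_0) is the product of the y_i-coordinate of x_0 and the x_0-coordinate
   of y_i; so k_i is a ratio of such coordinates. Both are computed in the split basis
   u_j = tau_j(A) y_0, on which A* acts as A* u_j = ths_j u_j + phi_j u_(j-1), and which is
   triangular with respect to both eigenbases. Comparing coordinates gives the x_0-coordinate of
   y_i as phi_1...phi_i / (b_i tau*_i(ths_i)) times that of y_0, where b_i is a product of
   subdiagonal entries of A in the y-basis. For the split basis of Phi-Down the last vector is a
   multiple of x_0, and the same comparison gives the y_i-coordinate of x_0 as
   b_i phi'_(i+1)...phi'_d / eta*_(d-i)(ths_i) up to that multiple. The factors b_i cancel in k_i. *)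

section \<open>Coordinates with respect to a basis\<close>

definition lin_comb :: "nat \<Rightarrow> (nat \<Rightarrow> 'a::comm_ring_1 vec) \<Rightarrow> (nat \<Rightarrow> 'a) \<Rightarrow> nat set \<Rightarrow> 'a vec" where
  "lin_comb n v c S = vec n (\<lambda>r. \<Sum>j\<in>S. c j * v j $ r)"

lemma lin_comb_carrier [simp]: "lin_comb n v c S \<in> carrier_vec n"
  unfolding lin_comb_def by simp

lemma dim_lin_comb [simp]: "dim_vec (lin_comb n v c S) = n"
  unfolding lin_comb_def by simp

lemma index_lin_comb [simp]: "r < n \<Longrightarrow> lin_comb n v c S $ r = (\<Sum>j\<in>S. c j * v j $ r)"
  unfolding lin_comb_def by simp

lemma lin_comb_cong:
  "(\<And>j. j \<in> S \<Longrightarrow> v j = v' j) \<Longrightarrow> (\<And>j. j \<in> S \<Longrightarrow> c j = c' j) \<Longrightarrow> lin_comb n v c S = lin_comb n v' c' S"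
  unfolding lin_comb_def by (auto intro!: eq_vecI sum.cong)

lemma mult_mat_lin_comb:
  assumes M: "M \<in> carrier_mat n n" and v: "\<And>j. j \<in> S \<Longrightarrow> v j \<in> carrier_vec n"
  shows "M *\<^sub>v lin_comb n v c S = lin_comb n (\<lambda>j. M *\<^sub>v v j) c S"
proof (rule eq_vecI)
  fix r assume "r < dim_vec (lin_comb n (\<lambda>j. M *\<^sub>v v j) c S)"
  hence r: "r < n" by simp
  have "(M *\<^sub>v lin_comb n v c S) $ r = (\<Sum>k<n. M $$ (r, k) * (\<Sum>j\<in>S. c j * v j $ k))"
    using M r by (simp add: scalar_prod_def lessThan_atLeast0)
  also have "\<dots> = (\<Sum>j\<in>S. c j * (\<Sum>k<n. M $$ (r, k) * v j $ k))"
    unfolding sum_distrib_left by (rule trans[OF sum.swap]) (simp add: mult.left_commute)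
  also have "\<dots> = lin_comb n (\<lambda>j. M *\<^sub>v v j) c S $ r"
  proof -
    have "\<And>j. j \<in> S \<Longrightarrow> dim_vec (v j) = n" using v by auto
    then show ?thesis using M r by (simp add: scalar_prod_def lessThan_atLeast0 row_def)
  qed
  finally show "(M *\<^sub>v lin_comb n v c S) $ r = lin_comb n (\<lambda>j. M *\<^sub>v v j) c S $ r" .
qed (use M in simp)

locale vec_basis =
  fixes n :: nat and b :: "nat \<Rightarrow> 'a::field vec"
  assumes basis_carrier: "\<And>j. j < n \<Longrightarrow> b j \<in> carrier_vec n"
    and lin_indep: "\<And>c. lin_comb n b c {..<n} = 0\<^sub>v n \<Longrightarrow> \<forall>j<n. c j = 0"
begin

definition basis_mat :: "'a mat" where
  "basis_mat = mat n n (\<lambda>(r, j). b j $ r)"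

lemma basis_mat_carrier [simp]: "basis_mat \<in> carrier_mat n n"
  unfolding basis_mat_def by simp

lemma basis_mat_mult_vec: "v \<in> carrier_vec n \<Longrightarrow> basis_mat *\<^sub>v v = lin_comb n b (\<lambda>j. v $ j) {..<n}"
  by (rule eq_vecI)
    (auto simp: basis_mat_def scalar_prod_def row_def lessThan_atLeast0 mult.commute intro!: sum.cong)

lemma det_basis_mat_nonzero: "det basis_mat \<noteq> 0"
proof
  assume "det basis_mat = 0"
  then obtain v where v: "v \<in> carrier_vec n" "v \<noteq> 0\<^sub>v n" "basis_mat *\<^sub>v v = 0\<^sub>v n"
    using det_0_iff_vec_prod_zero_field[OF basis_mat_carrier] by auto
  then have "\<forall>j<n. v $ j = 0"
    using lin_indep[of "\<lambda>j. v $ j"] basis_mat_mult_vec by auto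
  then have "v = 0\<^sub>v n" using v(1) by (intro eq_vecI) auto
  with v(2) show False by simp
qed

definition basis_inv :: "'a mat" where
  "basis_inv = (SOME B. B \<in> carrier_mat n n \<and> B * basis_mat = 1\<^sub>m n \<and> basis_mat * B = 1\<^sub>m n)"

lemma basis_inv: "basis_inv \<in> carrier_mat n n" "basis_inv * basis_mat = 1\<^sub>m n" "basis_mat * basis_inv = 1\<^sub>m n"
proof -
  have "\<exists>B. B \<in> carrier_mat n n \<and> B * basis_mat = 1\<^sub>m n \<and> basis_mat * B = 1\<^sub>m n"
    using det_non_zero_imp_unit[OF basis_mat_carrier det_basis_mat_nonzero, unfolded Units_def, of "()"]
    by (auto simp: ring_mat_def)
  from someI_ex[OF this] show "basis_inv \<in> carrier_mat n n" "basis_inv * basis_mat = 1\<^sub>m n"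
    "basis_mat * basis_inv = 1\<^sub>m n" unfolding basis_inv_def by auto
qed

definition coord :: "nat \<Rightarrow> 'a vec \<Rightarrow> 'a" where
  "coord j v = (basis_inv *\<^sub>v v) $ j"

lemma coord_eq_sum: "j < n \<Longrightarrow> v \<in> carrier_vec n \<Longrightarrow> coord j v = (\<Sum>r<n. basis_inv $$ (j, r) * v $ r)"
  using basis_inv(1) by (simp add: coord_def scalar_prod_def row_def lessThan_atLeast0)

lemma coord_expansion: assumes v: "v \<in> carrier_vec n" shows "v = lin_comb n b (\<lambda>j. coord j v) {..<n}"
proof -
  have "v = (basis_mat * basis_inv) *\<^sub>v v" using basis_inv(3) v by simp
  also have "\<dots> = basis_mat *\<^sub>v (basis_inv *\<^sub>v v)"
    using assoc_mult_mat_vec basis_inv(1) basis_mat_carrier v by blast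
  also have "\<dots> = lin_comb n b (\<lambda>j. coord j v) {..<n}"
    using basis_inv(1) v by (simp add: basis_mat_mult_vec coord_def)
  finally show ?thesis .
qed

lemma coord_lin_comb_basis: assumes j: "j < n" shows "coord j (lin_comb n b c {..<n}) = c j"
proof -
  have "lin_comb n b c {..<n} = basis_mat *\<^sub>v vec n c"
    by (auto simp: basis_mat_mult_vec intro: lin_comb_cong)
  then have "basis_inv *\<^sub>v lin_comb n b c {..<n} = (basis_inv * basis_mat) *\<^sub>v vec n c"
    by (simp add: assoc_mult_mat_vec[OF basis_inv(1) basis_mat_carrier vec_carrier])
  thus ?thesis using j basis_inv(2) by (simp add: coord_def)
qed

lemma coord_lin_comb:
  assumes j: "j < n" and v: "\<And>m. m \<in> S \<Longrightarrow> v m \<in> carrier_vec n"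
  shows "coord j (lin_comb n v c S) = (\<Sum>m\<in>S. c m * coord j (v m))"
proof -
  have "coord j (lin_comb n v c S) = (\<Sum>r<n. basis_inv $$ (j, r) * (\<Sum>m\<in>S. c m * v m $ r))"
    using j by (simp add: coord_eq_sum)
  also have "\<dots> = (\<Sum>m\<in>S. c m * (\<Sum>r<n. basis_inv $$ (j, r) * v m $ r))"
    unfolding sum_distrib_left by (rule trans[OF sum.swap]) (simp add: mult.left_commute)
  also have "\<dots> = (\<Sum>m\<in>S. c m * coord j (v m))" using j v by (simp add: coord_eq_sum)
  finally show ?thesis .
qed

lemma coord_add: "j < n \<Longrightarrow> v \<in> carrier_vec n \<Longrightarrow> w \<in> carrier_vec n \<Longrightarrow> coord j (v + w) = coord j v + coord j w"
  unfolding coord_def using mult_add_distrib_mat_vec[OF basis_inv(1), of v w] basis_inv(1) by simp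

lemma coord_minus: "j < n \<Longrightarrow> v \<in> carrier_vec n \<Longrightarrow> w \<in> carrier_vec n \<Longrightarrow> coord j (v - w) = coord j v - coord j w"
  unfolding coord_def using mult_minus_distrib_mat_vec[OF basis_inv(1), of v w] basis_inv(1) by simp

lemma coord_smult: "j < n \<Longrightarrow> v \<in> carrier_vec n \<Longrightarrow> coord j (a \<cdot>\<^sub>v v) = a * coord j v"
  unfolding coord_def using mult_mat_vec[OF basis_inv(1), of v a] basis_inv(1) by simp

lemma coord_zero: "j < n \<Longrightarrow> coord j (0\<^sub>v n) = 0"
  unfolding coord_def using basis_inv(1) by simp

lemma coord_basis: assumes "j < n" "k < n" shows "coord j (b k) = (if j = k then 1 else 0)"
proof -
  have "b k = lin_comb n b (\<lambda>m. if m = k then 1 else 0) {..<n}"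
  proof (rule eq_vecI)
    fix r assume "r < dim_vec (lin_comb n b (\<lambda>m. if m = k then 1 else 0) {..<n})"
    moreover have "(\<Sum>j<n. (if j = k then 1 else 0) * b j $ r) = (\<Sum>j<n. if j = k then b j $ r else 0)"
      by (rule sum.cong) auto
    ultimately show "b k $ r = lin_comb n b (\<lambda>m. if m = k then 1 else 0) {..<n} $ r"
      using assms by simp
  qed (use basis_carrier[OF assms(2)] in simp)
  then have "coord j (b k) = coord j (lin_comb n b (\<lambda>m. if m = k then 1 else 0) {..<n})"
    by (rule arg_cong)
  then show ?thesis using coord_lin_comb_basis[OF assms(1)] by simp
qed

lemma basis_nonzero: "k < n \<Longrightarrow> b k \<noteq> 0\<^sub>v n"
  using coord_basis[of k k] coord_zero[of k] by auto

lemma eq_by_coord: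
  assumes "v \<in> carrier_vec n" "w \<in> carrier_vec n" "\<And>j. j < n \<Longrightarrow> coord j v = coord j w"
  shows "v = w"
proof -
  have "v = lin_comb n b (\<lambda>j. coord j v) {..<n}" by (rule coord_expansion[OF assms(1)])
  also have "\<dots> = lin_comb n b (\<lambda>j. coord j w) {..<n}"
    using assms(3) by (intro lin_comb_cong) auto
  also have "\<dots> = w" by (rule coord_expansion[OF assms(2), symmetric])
  finally show ?thesis .
qed

lemma mult_mat_coord_expansion:
  assumes M: "M \<in> carrier_mat n n" and v: "v \<in> carrier_vec n"
  shows "M *\<^sub>v v = lin_comb n (\<lambda>m. M *\<^sub>v b m) (\<lambda>m. coord m v) {..<n}"
proof -
  have "M *\<^sub>v v = M *\<^sub>v lin_comb n b (\<lambda>j. coord j v) {..<n}"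
    using coord_expansion[OF v] by (rule arg_cong)
  also have "\<dots> = lin_comb n (\<lambda>m. M *\<^sub>v b m) (\<lambda>m. coord m v) {..<n}"
    by (rule mult_mat_lin_comb[OF M]) (use basis_carrier in auto)
  finally show ?thesis .
qed

lemma coord_mult_mat:
  assumes M: "M \<in> carrier_mat n n" and v: "v \<in> carrier_vec n" and j: "j < n"
  shows "coord j (M *\<^sub>v v) = (\<Sum>m<n. coord m v * coord j (M *\<^sub>v b m))"
  unfolding mult_mat_coord_expansion[OF M v] using M basis_carrier by (intro coord_lin_comb[OF j]) auto

lemma mat_eq_on_basis:
  assumes M: "M \<in> carrier_mat n n" and N: "N \<in> carrier_mat n n"
    and eq: "\<And>k. k < n \<Longrightarrow> M *\<^sub>v b k = N *\<^sub>v b k"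
  shows "M = N"
proof (rule eq_matI)
  fix i j assume i: "i < dim_row N" and j: "j < dim_col N"
  have "M *\<^sub>v unit_vec n j = N *\<^sub>v unit_vec n j"
    unfolding mult_mat_coord_expansion[OF M unit_vec_carrier] mult_mat_coord_expansion[OF N unit_vec_carrier]
    using eq by (intro lin_comb_cong) auto
  moreover have "(M *\<^sub>v unit_vec n j) $ i = M $$ (i, j)" "(N *\<^sub>v unit_vec n j) $ i = N $$ (i, j)"
    using M N i j by auto
  ultimately show "M $$ (i, j) = N $$ (i, j)" by simp
qed (use M N in auto)

end

section \<open>Multiplicity-free matrices and their primitive idempotents\<close>

lemma smult_mat_mult_vec: "M \<in> carrier_mat n m \<Longrightarrow> w \<in> carrier_vec m \<Longrightarrow> (c \<cdot>\<^sub>m M) *\<^sub>v w = c \<cdot>\<^sub>v (M *\<^sub>v w)"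
  by (rule eq_vecI) (auto simp: scalar_prod_def sum_distrib_left mult.assoc)

lemma shift_mult_vec:
  assumes "(A::'a::field mat) \<in> carrier_mat n n" "w \<in> carrier_vec n"
  shows "(A - t \<cdot>\<^sub>m 1\<^sub>m n) *\<^sub>v w = A *\<^sub>v w - t \<cdot>\<^sub>v w"
  using assms by (simp add: minus_mult_distrib_mat_vec smult_mat_mult_vec[of _ n n])

lemma shift_carrier [simp]: "A \<in> carrier_mat n n \<Longrightarrow> A - t \<cdot>\<^sub>m 1\<^sub>m n \<in> carrier_mat n n"
  by auto

lemma mult_mat_zero_vec: "M \<in> carrier_mat n m \<Longrightarrow> M *\<^sub>v 0\<^sub>v m = 0\<^sub>v n"
  by (rule eq_vecI) (auto simp: scalar_prod_def)

lemma zero_mat_mult_vec: "v \<in> carrier_vec m \<Longrightarrow> 0\<^sub>m n m *\<^sub>v v = 0\<^sub>v n"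
  by (intro eq_vecI) (auto simp: scalar_prod_def intro!: sum.neutral)

lemma smult_vec_eq_zero_imp:
  assumes "c \<cdot>\<^sub>v v = 0\<^sub>v n" "v \<in> carrier_vec n" "v \<noteq> 0\<^sub>v n"
  shows "(c::'a::field) = 0"
proof -
  obtain r where r: "r < n" "v $ r \<noteq> 0"
    using assms(2,3) by (metis eq_vecI carrier_vecD index_zero_vec(1,2))
  have "(c \<cdot>\<^sub>v v) $ r = 0" using assms(1) r by simp
  thus ?thesis using r assms(2) by simp
qed

lemma smult_vec_right_cancel:
  assumes "c \<cdot>\<^sub>v v = e \<cdot>\<^sub>v v" "v \<in> carrier_vec n" "v \<noteq> 0\<^sub>v n"
  shows "(c::'a::field) = e"
proof -
  have "(c - e) \<cdot>\<^sub>v v = 0\<^sub>v n"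
  proof (rule eq_vecI)
    fix r assume "r < dim_vec (0\<^sub>v n :: 'a vec)"
    moreover have "(c \<cdot>\<^sub>v v) $ r = (e \<cdot>\<^sub>v v) $ r" using assms(1) by simp
    ultimately show "((c - e) \<cdot>\<^sub>v v) $ r = 0\<^sub>v n $ r" using assms(2) by (simp add: algebra_simps)
  qed (use assms in simp)
  from smult_vec_eq_zero_imp[OF this assms(2,3)] show ?thesis by simp
qed

lemma foldr_shift_mult_eigenvector:
  fixes A :: "'a::field mat"
  assumes A: "A \<in> carrier_mat n n" and v: "v \<in> carrier_vec n" and ev: "A *\<^sub>v v = \<mu> \<cdot>\<^sub>v v"
  shows "foldr (\<lambda>j M. ((1 / (t - th j)) \<cdot>\<^sub>m (A - th j \<cdot>\<^sub>m 1\<^sub>m n)) * M) L (1\<^sub>m n) \<in> carrier_mat n n \<and>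
    foldr (\<lambda>j M. ((1 / (t - th j)) \<cdot>\<^sub>m (A - th j \<cdot>\<^sub>m 1\<^sub>m n)) * M) L (1\<^sub>m n) *\<^sub>v v
     = (\<Prod>j\<leftarrow>L. (\<mu> - th j) / (t - th j)) \<cdot>\<^sub>v v"
proof (induction L)
  case Nil then show ?case using v by simp
next
  case (Cons j L)
  let ?P = "foldr (\<lambda>j M. ((1 / (t - th j)) \<cdot>\<^sub>m (A - th j \<cdot>\<^sub>m 1\<^sub>m n)) * M) L (1\<^sub>m n)"
  let ?c = "1 / (t - th j)" and ?p = "\<Prod>j\<leftarrow>L. (\<mu> - th j) / (t - th j)"
  have P: "?P \<in> carrier_mat n n" and Pv: "?P *\<^sub>v v = ?p \<cdot>\<^sub>v v" using Cons by auto
  have Q: "?c \<cdot>\<^sub>m (A - th j \<cdot>\<^sub>m 1\<^sub>m n) \<in> carrier_mat n n" using A by simp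
  have "(?c \<cdot>\<^sub>m (A - th j \<cdot>\<^sub>m 1\<^sub>m n) * ?P) *\<^sub>v v = (?c \<cdot>\<^sub>m (A - th j \<cdot>\<^sub>m 1\<^sub>m n)) *\<^sub>v (?p \<cdot>\<^sub>v v)"
    using assoc_mult_mat_vec[OF Q P v] Pv by simp
  also have "\<dots> = ?c \<cdot>\<^sub>v (?p \<cdot>\<^sub>v (\<mu> \<cdot>\<^sub>v v) - th j \<cdot>\<^sub>v (?p \<cdot>\<^sub>v v))"
    using A v ev by (simp add: smult_mat_mult_vec[of _ n n] shift_mult_vec mult_mat_vec)
  also have "\<dots> = ((\<mu> - th j) / (t - th j) * ?p) \<cdot>\<^sub>v v"
    using v by (intro eq_vecI) (auto simp: field_simps)
  finally show ?case using Q P by simp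
qed

locale eigen_ordered =
  fixes d :: nat and A :: "'a::field mat" and th :: "nat \<Rightarrow> 'a"
  assumes mult_free: "multiplicity_free d A" and ordering: "eigen_ordering d A th"
begin

abbreviation eigvec :: "nat \<Rightarrow> 'a vec" where
  "eigvec j \<equiv> find_eigenvector A (th j)"

abbreviation E :: "nat \<Rightarrow> 'a mat" where
  "E i \<equiv> prim_idem d A th i"

lemma A_carrier [simp]: "A \<in> carrier_mat (Suc d) (Suc d)"
  using mult_free unfolding multiplicity_free_def by auto

lemma dim_A [simp]: "dim_row A = Suc d" "dim_col A = Suc d"
  using carrier_matD[OF A_carrier] by auto

lemma th_eq_iff: "i \<le> d \<Longrightarrow> j \<le> d \<Longrightarrow> th i = th j \<longleftrightarrow> i = j"
  using ordering unfolding eigen_ordering_def inj_on_def by auto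

lemma eigvec:
  assumes "j \<le> d"
  shows "eigvec j \<in> carrier_vec (Suc d)" "eigvec j \<noteq> 0\<^sub>v (Suc d)" "A *\<^sub>v eigvec j = th j \<cdot>\<^sub>v eigvec j"
proof -
  have "eigenvalue A (th j)" using ordering assms unfolding eigen_ordering_def by auto
  then have "eigenvector A (eigvec j) (th j)" using find_eigenvector A_carrier by blast
  then show "eigvec j \<in> carrier_vec (Suc d)" "eigvec j \<noteq> 0\<^sub>v (Suc d)" "A *\<^sub>v eigvec j = th j \<cdot>\<^sub>v eigvec j"
    unfolding eigenvector_def using A_carrier by auto
qed

lemma eigvec_carrier [simp]: "j \<le> d \<Longrightarrow> eigvec j \<in> carrier_vec (Suc d)"
  by (rule eigvec(1))

lemma dim_eigvec [simp]: "j \<le> d \<Longrightarrow> dim_vec (eigvec j) = Suc d"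
  using eigvec(1) by auto

lemma prim_idem_mult_eigenvector:
  assumes v: "v \<in> carrier_vec (Suc d)" and ev: "A *\<^sub>v v = \<mu> \<cdot>\<^sub>v v"
  shows "E i \<in> carrier_mat (Suc d) (Suc d)"
    and "E i *\<^sub>v v = (\<Prod>j\<in>{..d} - {i}. (\<mu> - th j) / (th i - th j)) \<cdot>\<^sub>v v"
proof -
  let ?L = "filter (\<lambda>j. j \<noteq> i) [0..<Suc d]"
  have "set ?L = {..d} - {i}" "distinct ?L" by auto
  then have "(\<Prod>j\<leftarrow>?L. (\<mu> - th j) / (th i - th j)) = (\<Prod>j\<in>{..d} - {i}. (\<mu> - th j) / (th i - th j))"
    by (metis prod.distinct_set_conv_list)
  then show "E i \<in> carrier_mat (Suc d) (Suc d)"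
    and "E i *\<^sub>v v = (\<Prod>j\<in>{..d} - {i}. (\<mu> - th j) / (th i - th j)) \<cdot>\<^sub>v v"
    using foldr_shift_mult_eigenvector[OF A_carrier v ev, of "th i" th ?L]
    unfolding prim_idem_def by simp_all
qed

lemma prim_idem_carrier [simp]: "E i \<in> carrier_mat (Suc d) (Suc d)"
  using prim_idem_mult_eigenvector(1)[OF eigvec(1,3)] by blast

lemma prim_idem_mult_carrier [simp]: "v \<in> carrier_vec (Suc d) \<Longrightarrow> E i *\<^sub>v v \<in> carrier_vec (Suc d)"
  by (rule mult_mat_vec_carrier[OF prim_idem_carrier])

lemma prim_idem_mult_eigvec:
  assumes i: "i \<le> d" and k: "k \<le> d"
  shows "E i *\<^sub>v eigvec k = (if k = i then eigvec k else 0\<^sub>v (Suc d))"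
proof -
  have "E i *\<^sub>v eigvec k = (\<Prod>j\<in>{..d} - {i}. (th k - th j) / (th i - th j)) \<cdot>\<^sub>v eigvec k"
    by (rule prim_idem_mult_eigenvector(2)[OF eigvec(1,3)[OF k]])
  moreover have "k = i \<Longrightarrow> (\<Prod>j\<in>{..d} - {i}. (th k - th j) / (th i - th j)) = 1"
    using i th_eq_iff by (intro prod.neutral) auto
  moreover have "k \<noteq> i \<Longrightarrow> (\<Prod>j\<in>{..d} - {i}. (th k - th j) / (th i - th j)) = 0"
    using k by (intro prod_zero) auto
  ultimately show ?thesis using eigvec(1)[OF k] by auto
qed

lemma lin_comb_prim_idem_eigvec:
  assumes i: "i \<le> d"
  shows "lin_comb (Suc d) (\<lambda>j. E i *\<^sub>v eigvec j) c {..<Suc d} = c i \<cdot>\<^sub>v eigvec i"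
proof (rule eq_vecI)
  fix r assume "r < dim_vec (c i \<cdot>\<^sub>v eigvec i)"
  then have r: "r < Suc d" using i by simp
  have "(\<Sum>j<Suc d. c j * (E i *\<^sub>v eigvec j) $ r) = (\<Sum>j<Suc d. if j = i then c i * eigvec i $ r else 0)"
    using prim_idem_mult_eigvec[OF i] r by (intro sum.cong) auto
  then show "lin_comb (Suc d) (\<lambda>j. E i *\<^sub>v eigvec j) c {..<Suc d} $ r = (c i \<cdot>\<^sub>v eigvec i) $ r"
    using r i by simp
qed (use i in simp)

lemma eigvec_lin_indep:
  assumes "lin_comb (Suc d) eigvec c {..<Suc d} = 0\<^sub>v (Suc d)"
  shows "\<forall>j<Suc d. c j = 0"
proof (intro allI impI)
  fix i assume "i < Suc d" hence i: "i \<le> d" by simp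
  have "c i \<cdot>\<^sub>v eigvec i = lin_comb (Suc d) (\<lambda>j. E i *\<^sub>v eigvec j) c {..<Suc d}"
    using lin_comb_prim_idem_eigvec[OF i] by simp
  also have "\<dots> = E i *\<^sub>v lin_comb (Suc d) eigvec c {..<Suc d}"
    by (rule mult_mat_lin_comb[symmetric]) auto
  also have "\<dots> = E i *\<^sub>v 0\<^sub>v (Suc d)" using assms by simp
  also have "\<dots> = 0\<^sub>v (Suc d)"
    by (rule mult_mat_zero_vec[OF prim_idem_carrier])
  finally show "c i = 0" using eigvec[OF i] smult_vec_eq_zero_imp by blast
qed

sublocale vec_basis "Suc d" eigvec
  by unfold_locales (use eigvec eigvec_lin_indep in auto)

lemma coord_eigvec: "j \<le> d \<Longrightarrow> k \<le> d \<Longrightarrow> coord j (eigvec k) = (if j = k then 1 else 0)"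
  using coord_basis by simp

lemma prim_idem_mult_vec:
  assumes v: "v \<in> carrier_vec (Suc d)" and i: "i \<le> d"
  shows "E i *\<^sub>v v = coord i v \<cdot>\<^sub>v eigvec i"
proof -
  have "E i *\<^sub>v v = lin_comb (Suc d) (\<lambda>j. E i *\<^sub>v eigvec j) (\<lambda>j. coord j v) {..<Suc d}"
    by (rule mult_mat_coord_expansion[OF prim_idem_carrier v])
  also have "\<dots> = coord i v \<cdot>\<^sub>v eigvec i"
    by (rule lin_comb_prim_idem_eigvec[OF i])
  finally show ?thesis .
qed

lemma coord_mult_A:
  assumes v: "v \<in> carrier_vec (Suc d)" and j: "j \<le> d"
  shows "coord j (A *\<^sub>v v) = th j * coord j v"
proof -
  have "coord j (A *\<^sub>v v) = (\<Sum>m<Suc d. coord m v * coord j (A *\<^sub>v eigvec m))"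
    using coord_mult_mat[OF A_carrier v] j by simp
  also have "\<dots> = (\<Sum>m<Suc d. if m = j then th j * coord j v else 0)"
    using j by (intro sum.cong) (auto simp: eigvec(3) coord_smult coord_eigvec[OF j])
  also have "\<dots> = th j * coord j v" using j by simp
  finally show ?thesis .
qed

lemma prim_idem_sandwich:
  assumes N: "N \<in> carrier_mat (Suc d) (Suc d)" and k: "k \<le> d" and j: "j \<le> d" and m: "m \<le> d"
  shows "(E k * N * E j) *\<^sub>v eigvec m = (if m = j then coord k (N *\<^sub>v eigvec j) \<cdot>\<^sub>v eigvec k else 0\<^sub>v (Suc d))"
proof -
  have EN: "E k * N \<in> carrier_mat (Suc d) (Suc d)" using N by (intro mult_carrier_mat) auto
  have "(E k * N * E j) *\<^sub>v eigvec m = E k *\<^sub>v (N *\<^sub>v (E j *\<^sub>v eigvec m))"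
    using N m by (simp add: assoc_mult_mat_vec[OF EN prim_idem_carrier] assoc_mult_mat_vec[OF prim_idem_carrier N])
  also have "\<dots> = (if m = j then coord k (N *\<^sub>v eigvec j) \<cdot>\<^sub>v eigvec k else 0\<^sub>v (Suc d))"
  proof (cases "m = j")
    case True
    then show ?thesis using prim_idem_mult_eigvec[OF j m] prim_idem_mult_vec[OF _ k] N m by simp
  next
    case False
    have "N *\<^sub>v 0\<^sub>v (Suc d) = 0\<^sub>v (Suc d)" "E k *\<^sub>v 0\<^sub>v (Suc d) = 0\<^sub>v (Suc d)"
      using mult_mat_zero_vec[OF N] mult_mat_zero_vec[OF prim_idem_carrier] by simp_all
    with False show ?thesis using prim_idem_mult_eigvec[OF j m] by simp
  qed
  finally show ?thesis .
qed

lemma prim_idem_sandwich_eq_zero_iff: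
  assumes N: "N \<in> carrier_mat (Suc d) (Suc d)" and k: "k \<le> d" and j: "j \<le> d"
  shows "E k * N * E j = 0\<^sub>m (Suc d) (Suc d) \<longleftrightarrow> coord k (N *\<^sub>v eigvec j) = 0"
proof
  assume z: "E k * N * E j = 0\<^sub>m (Suc d) (Suc d)"
  have "coord k (N *\<^sub>v eigvec j) \<cdot>\<^sub>v eigvec k = 0\<^sub>v (Suc d)"
    using prim_idem_sandwich[OF N k j j] zero_mat_mult_vec[OF eigvec_carrier[OF j]] by (simp add: z)
  then show "coord k (N *\<^sub>v eigvec j) = 0" using smult_vec_eq_zero_imp eigvec[OF k] by blast
next
  assume z: "coord k (N *\<^sub>v eigvec j) = 0"
  show "E k * N * E j = 0\<^sub>m (Suc d) (Suc d)"
  proof (rule mat_eq_on_basis)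
    fix m assume "m < Suc d"
    then show "(E k * N * E j) *\<^sub>v eigvec m = 0\<^sub>m (Suc d) (Suc d) *\<^sub>v eigvec m"
      using prim_idem_sandwich[OF N k j] z zero_mat_mult_vec[OF eigvec_carrier] k by auto
  qed (meson N mult_carrier_mat prim_idem_carrier zero_carrier_mat)+
qed

lemma finsum_prim_idem_mult:
  assumes S: "S \<subseteq> {..d}" and w: "\<And>h. h \<in> S \<Longrightarrow> w h \<in> carrier_vec (Suc d)"
  shows "finsum_vec TYPE('a) (Suc d) (\<lambda>h. E h *\<^sub>v w h) S = lin_comb (Suc d) eigvec (\<lambda>h. coord h (w h)) S"
proof (rule eq_vecI)
  have fin: "finite S" using S finite_subset by blast
  have Ec: "(\<lambda>h. E h *\<^sub>v w h) \<in> S \<rightarrow> carrier_vec (Suc d)" using w by auto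
  fix r assume "r < dim_vec (lin_comb (Suc d) eigvec (\<lambda>h. coord h (w h)) S)"
  moreover have "E h *\<^sub>v w h = coord h (w h) \<cdot>\<^sub>v eigvec h" if "h \<in> S" for h
    using that S w prim_idem_mult_vec by auto
  ultimately show "finsum_vec TYPE('a) (Suc d) (\<lambda>h. E h *\<^sub>v w h) S $ r = lin_comb (Suc d) eigvec (\<lambda>h. coord h (w h)) S $ r"
    using S by (auto simp: index_finsum_vec[OF fin _ Ec] intro!: sum.cong)
next
  have "(\<lambda>h. E h *\<^sub>v w h) \<in> S \<rightarrow> carrier_vec (Suc d)" using w by auto
  from finsum_vec_closed[OF this]
  show "dim_vec (finsum_vec TYPE('a) (Suc d) (\<lambda>h. E h *\<^sub>v w h) S) = dim_vec (lin_comb (Suc d) eigvec (\<lambda>h. coord h (w h)) S)"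
    by simp
qed

lemma subspace_sum_eq:
  assumes S: "S \<subseteq> {..d}"
  shows "subspace_sum d E S = {v \<in> carrier_vec (Suc d). \<forall>j\<le>d. j \<notin> S \<longrightarrow> coord j v = 0}"
proof -
  note sum_eq = finsum_prim_idem_mult[OF S]
  show ?thesis
  proof (intro equalityI subsetI CollectI conjI allI impI)
    fix v assume "v \<in> subspace_sum d E S"
    then obtain w where w: "\<And>h. h \<in> S \<Longrightarrow> w h \<in> carrier_vec (Suc d)"
      and v: "v = lin_comb (Suc d) eigvec (\<lambda>h. coord h (w h)) S"
      unfolding subspace_sum_def using sum_eq by auto
    then show "v \<in> carrier_vec (Suc d)" by simp
    fix j assume j: "j \<le> d" "j \<notin> S"
    have "coord j v = (\<Sum>h\<in>S. coord h (w h) * coord j (eigvec h))"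
      unfolding v using j S by (intro coord_lin_comb) auto
    also have "\<dots> = 0"
    proof (intro sum.neutral ballI)
      fix h assume "h \<in> S"
      then have "h \<le> d" "h \<noteq> j" using S j by auto
      then show "coord h (w h) * coord j (eigvec h) = 0" using j by (simp add: coord_eigvec)
    qed
    finally show "coord j v = 0" .
  next
    fix v assume v: "v \<in> {v \<in> carrier_vec (Suc d). \<forall>j\<le>d. j \<notin> S \<longrightarrow> coord j v = 0}"
    have "(\<Sum>j\<in>S. coord j v * eigvec j $ r) = (\<Sum>j<Suc d. coord j v * eigvec j $ r)" for r
      by (rule sum.mono_neutral_left) (use S v in auto)
    then have "lin_comb (Suc d) eigvec (\<lambda>h. coord h v) S = lin_comb (Suc d) eigvec (\<lambda>h. coord h v) {..<Suc d}"
      unfolding lin_comb_def by simp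
    also have "\<dots> = v" using coord_expansion v by auto
    finally show "v \<in> subspace_sum d E S"
      unfolding subspace_sum_def using sum_eq[of "\<lambda>h. v"] v by auto
  qed
qed

lemma tau_star_nonzero:
  assumes "i \<le> d"
  shows "tau_star th i (th i) \<noteq> 0"
proof -
  have "th i - th h \<noteq> 0" if "h < i" for h using that assms th_eq_iff[of i h] by auto
  then show ?thesis unfolding tau_star_def by simp
qed

lemma eta_star_eq_prod: "i \<le> d \<Longrightarrow> eta_star d th (d - i) t = (\<Prod>h\<in>{i<..d}. t - th h)"
  unfolding eta_star_def
  by (rule prod.reindex_bij_witness[where i="\<lambda>h. d - h" and j="\<lambda>h. d - h"]) auto

lemma eta_star_nonzero:
  assumes "i \<le> d"
  shows "eta_star d th (d - i) (th i) \<noteq> 0"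
proof -
  have "th i - th h \<noteq> 0" if "i < h" "h \<le> d" for h using that assms th_eq_iff[of i h] by auto
  then show ?thesis using eta_star_eq_prod[OF assms] by simp
qed

end

lemma mtrace_rank_one:
  assumes M: "M \<in> carrier_mat n n" and w: "w \<in> carrier_vec n"
    and act: "\<And>v. v \<in> carrier_vec n \<Longrightarrow> M *\<^sub>v v = (\<Sum>r<n. L r * v $ r) \<cdot>\<^sub>v w"
  shows "mtrace M = (\<Sum>r<n. L r * w $ r)"
proof -
  have "M $$ (r, r) = L r * w $ r" if r: "r < n" for r
  proof -
    have "M $$ (r, r) = (M *\<^sub>v unit_vec n r) $ r" using M r by simp
    also have "\<dots> = (\<Sum>s<n. L s * unit_vec n r $ s) * w $ r" using act[of "unit_vec n r"] r w by simp
    also have "(\<Sum>s<n. L s * unit_vec n r $ s) = L r" using r by (simp add: unit_vec_def if_distrib cong: if_cong)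
    finally show ?thesis .
  qed
  thus ?thesis unfolding mtrace_def using M by simp
qed

lemma mtrace_prim_idem_mult:
  assumes B: "eigen_ordered d B sg" and C: "eigen_ordered d C tau" and a: "a \<le> d" and b: "b \<le> d"
  shows "mtrace (prim_idem d C tau a * prim_idem d B sg b)
    = vec_basis.coord (Suc d) (\<lambda>j. find_eigenvector C (tau j)) a (find_eigenvector B (sg b))
      * vec_basis.coord (Suc d) (\<lambda>j. find_eigenvector B (sg j)) b (find_eigenvector C (tau a))"
proof -
  interpret B: eigen_ordered d B sg by (rule B)
  interpret C: eigen_ordered d C tau by (rule C)
  let ?w = "C.coord a (B.eigvec b) \<cdot>\<^sub>v C.eigvec a"
  have wc: "?w \<in> carrier_vec (Suc d)" using a by simp
  have "mtrace (C.E a * B.E b) = (\<Sum>r<Suc d. B.basis_inv $$ (b, r) * ?w $ r)"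
  proof (rule mtrace_rank_one[OF _ wc])
    fix v :: "'a vec" assume v: "v \<in> carrier_vec (Suc d)"
    have "(C.E a * B.E b) *\<^sub>v v = C.E a *\<^sub>v (B.coord b v \<cdot>\<^sub>v B.eigvec b)"
      using assoc_mult_mat_vec[OF C.prim_idem_carrier B.prim_idem_carrier v] B.prim_idem_mult_vec[OF v b] by simp
    also have "\<dots> = B.coord b v \<cdot>\<^sub>v ?w"
      using mult_mat_vec[OF C.prim_idem_carrier B.eigvec_carrier[OF b]] C.prim_idem_mult_vec[OF B.eigvec_carrier[OF b] a]
      by simp
    finally show "(C.E a * B.E b) *\<^sub>v v = (\<Sum>r<Suc d. B.basis_inv $$ (b, r) * v $ r) \<cdot>\<^sub>v ?w"
      using B.coord_eq_sum b v by simp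
  qed (rule mult_carrier_mat[OF C.prim_idem_carrier B.prim_idem_carrier])
  also have "\<dots> = B.coord b ?w" using B.coord_eq_sum b wc by simp
  also have "\<dots> = C.coord a (B.eigvec b) * B.coord b (C.eigvec a)"
    using B.coord_smult b a by simp
  finally show ?thesis .
qed

section \<open>The split basis of a Leonard system\<close>

fun split_vec :: "'a::field mat \<Rightarrow> (nat \<Rightarrow> 'a) \<Rightarrow> 'a vec \<Rightarrow> nat \<Rightarrow> 'a vec" where
  "split_vec A th y0 0 = y0"
| "split_vec A th y0 (Suc k) = (A - th k \<cdot>\<^sub>m 1\<^sub>m (dim_row A)) *\<^sub>v split_vec A th y0 k"

locale leonard =
  fixes d :: nat and A As :: "'a::field mat" and th ths :: "nat \<Rightarrow> 'a"
  assumes leonard: "leonard_system d A As th ths"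
begin

sublocale X: eigen_ordered d A th
  using leonard unfolding leonard_system_def by unfold_locales auto

sublocale Y: eigen_ordered d As ths
  using leonard unfolding leonard_system_def by unfold_locales auto

abbreviation u :: "nat \<Rightarrow> 'a vec" where
  "u \<equiv> split_vec A th (Y.eigvec 0)"

text \<open>Unlike the split basis, this product does not depend on the ordering th, so it is shared
  by Phi and Phi-Down.\<close>
abbreviation subdiag_prod :: "nat \<Rightarrow> 'a" where
  "subdiag_prod k \<equiv> \<Prod>m<k. Y.coord (Suc m) (A *\<^sub>v Y.eigvec m)"

lemma A_coord_far: "k \<le> d \<Longrightarrow> j \<le> d \<Longrightarrow> Suc k < j \<or> Suc j < k \<Longrightarrow> Y.coord k (A *\<^sub>v Y.eigvec j) = 0"
  using leonard Y.prim_idem_sandwich_eq_zero_iff[OF X.A_carrier, of k j] unfolding leonard_system_def by auto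

lemma A_subdiag_nonzero: "j < d \<Longrightarrow> Y.coord (Suc j) (A *\<^sub>v Y.eigvec j) \<noteq> 0"
  using leonard Y.prim_idem_sandwich_eq_zero_iff[OF X.A_carrier, of "Suc j" j] unfolding leonard_system_def by auto

lemma As_coord_far: "k \<le> d \<Longrightarrow> j \<le> d \<Longrightarrow> Suc k < j \<or> Suc j < k \<Longrightarrow> X.coord k (As *\<^sub>v X.eigvec j) = 0"
  using leonard X.prim_idem_sandwich_eq_zero_iff[OF Y.A_carrier, of k j] unfolding leonard_system_def by auto

lemma As_superdiag_nonzero: "j < d \<Longrightarrow> X.coord j (As *\<^sub>v X.eigvec (Suc j)) \<noteq> 0"
  using leonard X.prim_idem_sandwich_eq_zero_iff[OF Y.A_carrier, of j "Suc j"] unfolding leonard_system_def by auto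

lemma subdiag_prod_nonzero: "k \<le> d \<Longrightarrow> subdiag_prod k \<noteq> 0"
  using A_subdiag_nonzero by simp

lemma u_carrier [simp]: "u k \<in> carrier_vec (Suc d)"
  by (induction k) (use mult_mat_vec_carrier[OF shift_carrier[OF X.A_carrier]] in auto)

lemma dim_u [simp]: "dim_vec (u k) = Suc d"
  using u_carrier by auto

lemma A_u_carrier [simp]: "A *\<^sub>v u k \<in> carrier_vec (Suc d)"
  using mult_mat_vec_carrier[OF X.A_carrier u_carrier] .

lemma As_u_carrier [simp]: "As *\<^sub>v u k \<in> carrier_vec (Suc d)"
  using mult_mat_vec_carrier[OF Y.A_carrier u_carrier] .

lemma u_Suc: "u (Suc k) = A *\<^sub>v u k - th k \<cdot>\<^sub>v u k"
  using shift_mult_vec[OF X.A_carrier u_carrier] by simp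

lemma X_coord_u: "j \<le> d \<Longrightarrow> X.coord j (u k) = X.coord j (Y.eigvec 0) * (\<Prod>h<k. th j - th h)"
proof (induction k)
  case (Suc k)
  then have "X.coord j (u (Suc k)) = (th j - th k) * X.coord j (u k)"
    by (simp add: u_Suc X.coord_minus X.coord_smult X.coord_mult_A algebra_simps del: split_vec.simps)
  with Suc show ?case by (simp add: algebra_simps)
qed simp

lemma X_coord_u_below: "j \<le> d \<Longrightarrow> j < k \<Longrightarrow> X.coord j (u k) = 0"
  using X_coord_u by (auto intro!: prod_zero)

lemma Y_coord_A_u_step:
  assumes k: "k < d" and j: "Suc k \<le> j" "j \<le> d" and above: "\<And>j. k < j \<Longrightarrow> j \<le> d \<Longrightarrow> Y.coord j (u k) = 0"
  shows "Y.coord j (A *\<^sub>v u k) = Y.coord k (u k) * Y.coord j (A *\<^sub>v Y.eigvec k)"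
proof -
  have "Y.coord j (A *\<^sub>v u k) = (\<Sum>m<Suc d. Y.coord m (u k) * Y.coord j (A *\<^sub>v Y.eigvec m))"
    using Y.coord_mult_mat[OF X.A_carrier u_carrier] j by simp
  also have "\<dots> = (\<Sum>m<Suc d. if m = k then Y.coord k (u k) * Y.coord j (A *\<^sub>v Y.eigvec k) else 0)"
  proof (rule sum.cong)
    fix m assume "m \<in> {..<Suc d}"
    then consider "m = k" | "m < k" | "k < m" "m \<le> d" by fastforce
    then show "Y.coord m (u k) * Y.coord j (A *\<^sub>v Y.eigvec m)
        = (if m = k then Y.coord k (u k) * Y.coord j (A *\<^sub>v Y.eigvec k) else 0)"
      by cases (use above A_coord_far[of j m] j in auto)
  qed simp
  also have "\<dots> = Y.coord k (u k) * Y.coord j (A *\<^sub>v Y.eigvec k)" using k by (subst sum.delta) auto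
  finally show ?thesis .
qed

lemma Y_coord_u: "k \<le> d \<Longrightarrow> (\<forall>j. k < j \<and> j \<le> d \<longrightarrow> Y.coord j (u k) = 0) \<and> Y.coord k (u k) = subdiag_prod k"
proof (induction k)
  case 0
  have "Y.coord j (u 0) = (if j = 0 then 1 else 0)" if "j \<le> d" for j
    using that Y.coord_eigvec[of j 0] by simp
  then show ?case by simp
next
  case (Suc k)
  then have k: "k < d" and above: "\<And>j. k < j \<Longrightarrow> j \<le> d \<Longrightarrow> Y.coord j (u k) = 0"
    and diag: "Y.coord k (u k) = subdiag_prod k" by auto
  have step: "Y.coord j (u (Suc k)) = Y.coord k (u k) * Y.coord j (A *\<^sub>v Y.eigvec k)"
    if j: "Suc k \<le> j" "j \<le> d" for j
  proof -
    have "Y.coord j (u (Suc k)) = Y.coord j (A *\<^sub>v u k) - th k * Y.coord j (u k)"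
      unfolding u_Suc using Y.coord_minus[of j "A *\<^sub>v u k" "th k \<cdot>\<^sub>v u k"] Y.coord_smult[of j "u k" "th k"] j
      by simp
    then show ?thesis using above[of j] j Y_coord_A_u_step[OF k j above] by simp
  qed
  show ?case
  proof (intro conjI allI impI)
    fix j assume "Suc k < j \<and> j \<le> d"
    then show "Y.coord j (u (Suc k)) = 0" using step A_coord_far[of j k] k by simp
  next
    show "Y.coord (Suc k) (u (Suc k)) = subdiag_prod (Suc k)"
      using step[of "Suc k"] diag k by simp
  qed
qed

lemma Y_coord_u_above: "k < j \<Longrightarrow> j \<le> d \<Longrightarrow> Y.coord j (u k) = 0"
  using Y_coord_u by auto

lemma Y_coord_u_diag: "k \<le> d \<Longrightarrow> Y.coord k (u k) = subdiag_prod k"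
  using Y_coord_u by auto

lemma lin_comb_u_coeff_zero_above:
  assumes z: "\<And>j. s \<le> j \<Longrightarrow> j \<le> d \<Longrightarrow> Y.coord j (lin_comb (Suc d) u c {..<Suc d}) = 0"
  shows "s \<le> m \<Longrightarrow> m \<le> d \<Longrightarrow> c m = 0"
proof (induction "d - m" arbitrary: m rule: less_induct)
  case less
  have "Y.coord m (lin_comb (Suc d) u c {..<Suc d}) = (\<Sum>m'<Suc d. c m' * Y.coord m (u m'))"
    using less by (intro Y.coord_lin_comb) auto
  also have "\<dots> = (\<Sum>m'<Suc d. if m' = m then c m * subdiag_prod m else 0)"
  proof (rule sum.cong)
    fix m' assume "m' \<in> {..<Suc d}"
    then consider "m' = m" | "m' < m" | "m < m'" "m' \<le> d" by fastforce
    then show "c m' * Y.coord m (u m') = (if m' = m then c m * subdiag_prod m else 0)"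
      by cases (use less Y_coord_u_diag Y_coord_u_above in auto)
  qed simp
  also have "\<dots> = c m * subdiag_prod m" using less by (subst sum.delta) auto
  finally have "c m * subdiag_prod m = 0" using z less by simp
  thus ?case using subdiag_prod_nonzero less by simp
qed


lemma u_lin_indep: "lin_comb (Suc d) u c {..<Suc d} = 0\<^sub>v (Suc d) \<Longrightarrow> \<forall>j<Suc d. c j = 0"
  using lin_comb_u_coeff_zero_above[of 0 c] Y.coord_zero by auto

sublocale U: vec_basis "Suc d" u
  by unfold_locales (use u_lin_indep in auto)

lemma X_coord_y0_nonzero:
  assumes k: "k \<le> d"
  shows "X.coord k (Y.eigvec 0) \<noteq> 0"
proof
  assume z: "X.coord k (Y.eigvec 0) = 0"
  have "X.coord k (X.eigvec k) = X.coord k (lin_comb (Suc d) u (\<lambda>m. U.coord m (X.eigvec k)) {..<Suc d})"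
    by (rule arg_cong[OF U.coord_expansion]) (use k in simp)
  also have "\<dots> = (\<Sum>m<Suc d. U.coord m (X.eigvec k) * X.coord k (u m))"
    using k by (intro X.coord_lin_comb) auto
  also have "\<dots> = 0"
    using X_coord_u[OF k] z by simp
  finally show False
    using X.coord_eigvec[OF k k] by simp
qed

lemma X_coord_u_diag_nonzero:
  assumes k: "k \<le> d"
  shows "X.coord k (u k) \<noteq> 0"
proof -
  have "th k - th h \<noteq> 0" if "h < k" for h using that k X.th_eq_iff[of k h] by auto
  then show ?thesis using X_coord_u[OF k] X_coord_y0_nonzero[OF k] by simp
qed

lemma lin_comb_u_coeff_zero_below:
  assumes z: "\<And>j. j < s \<Longrightarrow> j \<le> d \<Longrightarrow> X.coord j (lin_comb (Suc d) u c {..<Suc d}) = 0"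
  shows "m < s \<Longrightarrow> m \<le> d \<Longrightarrow> c m = 0"
proof (induction m rule: less_induct)
  case (less m)
  have "X.coord m (lin_comb (Suc d) u c {..<Suc d}) = (\<Sum>m'<Suc d. c m' * X.coord m (u m'))"
    using less by (intro X.coord_lin_comb) auto
  also have "\<dots> = (\<Sum>m'<Suc d. if m' = m then c m * X.coord m (u m) else 0)"
  proof (rule sum.cong)
    fix m' assume "m' \<in> {..<Suc d}"
    then consider "m' = m" | "m' < m" | "m < m'" by fastforce
    then show "c m' * X.coord m (u m') = (if m' = m then c m * X.coord m (u m) else 0)"
    proof cases
      case 2
      then show ?thesis using less.IH[of m'] less.prems by simp
    next
      case 3
      then show ?thesis using X_coord_u_below[of m m'] less.prems by simp
    qed simp
  qed simp
  also have "\<dots> = c m * X.coord m (u m)" using less by (subst sum.delta) auto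
  finally have "c m * X.coord m (u m) = 0" using z less by simp
  thus ?case using X_coord_u_diag_nonzero less by simp
qed

lemma U_coord_zero_above:
  assumes v: "v \<in> carrier_vec (Suc d)" and z: "\<And>j. s \<le> j \<Longrightarrow> j \<le> d \<Longrightarrow> Y.coord j v = 0"
    and m: "s \<le> m" "m \<le> d"
  shows "U.coord m v = 0"
proof -
  have e: "lin_comb (Suc d) u (\<lambda>m. U.coord m v) {..<Suc d} = v" by (rule sym[OF U.coord_expansion[OF v]])
  show ?thesis by (rule lin_comb_u_coeff_zero_above[of s _ m]) (use z m in \<open>simp_all only: e\<close>)
qed

lemma U_coord_zero_below:
  assumes v: "v \<in> carrier_vec (Suc d)" and z: "\<And>j. j < s \<Longrightarrow> j \<le> d \<Longrightarrow> X.coord j v = 0"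
    and m: "m < s" "m \<le> d"
  shows "U.coord m v = 0"
proof -
  have e: "lin_comb (Suc d) u (\<lambda>m. U.coord m v) {..<Suc d} = v" by (rule sym[OF U.coord_expansion[OF v]])
  show ?thesis by (rule lin_comb_u_coeff_zero_below[of s _ m]) (use z m in \<open>simp_all only: e\<close>)
qed

definition phi :: "nat \<Rightarrow> 'a" where
  "phi i = U.coord (i - 1) (As *\<^sub>v u i - ths i \<cdot>\<^sub>v u i)"

lemma Y_coord_As_u_shift_above:
  assumes "i \<le> j" "j \<le> d"
  shows "Y.coord j (As *\<^sub>v u i - ths i \<cdot>\<^sub>v u i) = 0"
proof -
  have "Y.coord j (As *\<^sub>v u i - ths i \<cdot>\<^sub>v u i) = (ths j - ths i) * Y.coord j (u i)"
    using assms by (simp add: Y.coord_minus Y.coord_smult Y.coord_mult_A algebra_simps del: split_vec.simps)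
  also have "\<dots> = 0" using Y_coord_u_above[of i j] assms by (cases "i = j") auto
  finally show ?thesis .
qed

lemma X_coord_As_u_shift_below:
  assumes "j < i - 1" "i \<le> d"
  shows "X.coord j (As *\<^sub>v u i - ths i \<cdot>\<^sub>v u i) = 0"
proof -
  have "X.coord j (As *\<^sub>v u i) = (\<Sum>m<Suc d. X.coord m (u i) * X.coord j (As *\<^sub>v X.eigvec m))"
    using assms by (intro X.coord_mult_mat) auto
  also have "\<dots> = 0"
  proof (intro sum.neutral ballI)
    fix m assume "m \<in> {..<Suc d}"
    then consider "m < i" | "Suc j < m" "m \<le> d" using assms by fastforce
    then show "X.coord m (u i) * X.coord j (As *\<^sub>v X.eigvec m) = 0"
      by cases (use assms X_coord_u_below As_coord_far[of j m] in auto)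
  qed
  finally show ?thesis
    using assms X_coord_u_below[of j i] by (simp add: X.coord_minus X.coord_smult del: split_vec.simps)
qed

lemma As_mult_u:
  assumes i: "1 \<le> i" "i \<le> d"
  shows "As *\<^sub>v u i = ths i \<cdot>\<^sub>v u i + phi i \<cdot>\<^sub>v u (i - 1)"
proof -
  let ?v = "As *\<^sub>v u i - ths i \<cdot>\<^sub>v u i"
  have "?v = phi i \<cdot>\<^sub>v u (i - 1)"
  proof (rule U.eq_by_coord)
    fix m assume m: "m < Suc d"
    have "U.coord m (phi i \<cdot>\<^sub>v u (i - 1)) = (if m = i - 1 then phi i else 0)"
      using m i U.coord_smult[OF m u_carrier] U.coord_basis[OF m, of "i - 1"] by simp
    moreover have "U.coord m ?v = 0" if "m \<noteq> i - 1"
    proof (cases "i \<le> m")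
      case True
      then show ?thesis using m Y_coord_As_u_shift_above by (intro U_coord_zero_above[of _ i]) auto
    next
      case False
      then show ?thesis using m i that X_coord_As_u_shift_below by (intro U_coord_zero_below[of _ "i - 1"]) auto
    qed
    ultimately show "U.coord m ?v = U.coord m (phi i \<cdot>\<^sub>v u (i - 1))" by (auto simp: phi_def)
  qed simp_all
  moreover have "As *\<^sub>v u i = ths i \<cdot>\<^sub>v u i + ?v"
    using carrier_vecD[OF u_carrier] by (intro eq_vecI) auto
  ultimately show ?thesis by simp
qed

lemma U_coord_As_u:
  assumes "m \<le> d" "j \<le> d"
  shows "U.coord j (As *\<^sub>v u m) = (if j = m then ths m else 0) + (if Suc j = m then phi m else 0)"
proof (cases "m = 0")
  case True
  then have "As *\<^sub>v u m = ths 0 \<cdot>\<^sub>v u 0" using Y.eigvec(3)[of 0] by simp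
  then show ?thesis using True assms U.coord_smult U.coord_basis by (simp del: split_vec.simps)
next
  case False
  then show ?thesis
    using assms As_mult_u[of m] U.coord_basis[of j]
    by (auto simp: U.coord_add U.coord_smult simp del: split_vec.simps)
qed

lemma U_coord_As:
  assumes v: "v \<in> carrier_vec (Suc d)" and k: "Suc k \<le> d"
  shows "U.coord k (As *\<^sub>v v) = ths k * U.coord k v + phi (Suc k) * U.coord (Suc k) v"
proof -
  have "U.coord k (As *\<^sub>v v) = (\<Sum>m<Suc d. U.coord m v * U.coord k (As *\<^sub>v u m))"
    using k by (intro U.coord_mult_mat[OF Y.A_carrier v]) auto
  also have "\<dots> = (\<Sum>m<Suc d. (if m = k then U.coord k v * ths k else 0)
      + (if m = Suc k then U.coord (Suc k) v * phi (Suc k) else 0))"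
    using k by (intro sum.cong) (auto simp: U_coord_As_u)
  also have "\<dots> = ths k * U.coord k v + phi (Suc k) * U.coord (Suc k) v"
    using k by (simp add: sum.distrib)
  finally show ?thesis .
qed

lemma phi_nonzero:
  assumes i: "1 \<le> i" "i \<le> d"
  shows "phi i \<noteq> 0"
proof
  assume "phi i = 0"
  then have "As *\<^sub>v u i = ths i \<cdot>\<^sub>v u i"
    using As_mult_u[OF i] carrier_vecD[OF u_carrier] by (auto intro!: eq_vecI)
  then have "X.coord (i - 1) (As *\<^sub>v u i) = 0"
    using i X_coord_u_below[of "i - 1" i] by (simp add: X.coord_smult del: split_vec.simps)
  moreover have "X.coord (i - 1) (As *\<^sub>v u i) = X.coord i (u i) * X.coord (i - 1) (As *\<^sub>v X.eigvec i)"
  proof -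
    have "X.coord (i - 1) (As *\<^sub>v u i) = (\<Sum>m<Suc d. X.coord m (u i) * X.coord (i - 1) (As *\<^sub>v X.eigvec m))"
      using i by (intro X.coord_mult_mat) auto
    also have "\<dots> = (\<Sum>m<Suc d. if m = i then X.coord i (u i) * X.coord (i - 1) (As *\<^sub>v X.eigvec i) else 0)"
    proof (rule sum.cong)
      fix m assume "m \<in> {..<Suc d}"
      then consider "m < i" | "m = i" | "Suc (i - 1) < m" "m \<le> d" using i by fastforce
      then show "X.coord m (u i) * X.coord (i - 1) (As *\<^sub>v X.eigvec m)
          = (if m = i then X.coord i (u i) * X.coord (i - 1) (As *\<^sub>v X.eigvec i) else 0)"
        by cases (use i X_coord_u_below[of m i] As_coord_far[of "i - 1" m] in auto)
    qed simp
    finally show ?thesis using i by simp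
  qed
  moreover have "X.coord (i - 1) (As *\<^sub>v X.eigvec i) \<noteq> 0"
    using i As_superdiag_nonzero[of "i - 1"] by (simp add: Suc_le_eq)
  ultimately show False
    using i X_coord_u_diag_nonzero[of i] by simp
qed

lemma split_U_eq:
  assumes "i \<le> d"
  shows "split_U d A As th ths i
    = {v \<in> carrier_vec (Suc d). (\<forall>j\<le>d. i < j \<longrightarrow> Y.coord j v = 0) \<and> (\<forall>j<i. X.coord j v = 0)}"
  using assms unfolding split_U_def by (auto simp: X.subspace_sum_eq Y.subspace_sum_eq)

lemma split_U_eq_span:
  assumes i: "i \<le> d" and v: "v \<in> split_U d A As th ths i"
  shows "v = U.coord i v \<cdot>\<^sub>v u i"
proof -
  have vc: "v \<in> carrier_vec (Suc d)" and hy: "\<And>j. j \<le> d \<Longrightarrow> i < j \<Longrightarrow> Y.coord j v = 0"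
    and hx: "\<And>j. j < i \<Longrightarrow> X.coord j v = 0" using v split_U_eq[OF i] by auto
  show ?thesis
  proof (rule U.eq_by_coord[OF vc])
    fix m assume m: "m < Suc d"
    have "U.coord m v = 0" if "m \<noteq> i"
    proof (cases "i < m")
      case True
      then show ?thesis using hy m by (intro U_coord_zero_above[OF vc, of "Suc i"]) auto
    next
      case False
      then show ?thesis using hx m that by (intro U_coord_zero_below[OF vc, of i]) auto
    qed
    then show "U.coord m v = U.coord m (U.coord i v \<cdot>\<^sub>v u i)"
      using m i U.coord_smult[OF m u_carrier] U.coord_basis[OF m, of i] by auto
  qed simp
qed

lemma u_in_split_U: "i \<le> d \<Longrightarrow> u i \<in> split_U d A As th ths i"
  unfolding split_U_eq using Y_coord_u_above X_coord_u_below by auto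

lemma split_mat_mult_u:
  assumes i: "1 \<le> i" "i \<le> d"
  shows "((A - th (i - 1) \<cdot>\<^sub>m 1\<^sub>m (Suc d)) * (As - ths i \<cdot>\<^sub>m 1\<^sub>m (Suc d))) *\<^sub>v u i = phi i \<cdot>\<^sub>v u i"
proof -
  let ?P = "A - th (i - 1) \<cdot>\<^sub>m 1\<^sub>m (Suc d)" and ?Q = "As - ths i \<cdot>\<^sub>m 1\<^sub>m (Suc d)"
  have P: "?P \<in> carrier_mat (Suc d) (Suc d)" and Q: "?Q \<in> carrier_mat (Suc d) (Suc d)" by simp_all
  have "?Q *\<^sub>v u i = phi i \<cdot>\<^sub>v u (i - 1)"
    using As_mult_u[OF i] by (auto simp: shift_mult_vec[OF Y.A_carrier u_carrier])
  moreover have "?P *\<^sub>v u (i - 1) = u i"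
    using i split_vec.simps(2)[of A th "Y.eigvec 0" "i - 1"] by simp
  ultimately show ?thesis
    using assoc_mult_mat_vec[OF P Q u_carrier] mult_mat_vec[OF P u_carrier] by simp
qed

lemma split_val_eq_phi:
  assumes i: "1 \<le> i" "i \<le> d"
  shows "split_val d A As th ths i = phi i"
proof -
  let ?M = "(A - th (i - 1) \<cdot>\<^sub>m 1\<^sub>m (Suc d)) * (As - ths i \<cdot>\<^sub>m 1\<^sub>m (Suc d))"
  have M: "?M \<in> carrier_mat (Suc d) (Suc d)"
    by (rule mult_carrier_mat[OF shift_carrier[OF X.A_carrier] shift_carrier[OF Y.A_carrier]])
  show ?thesis
    unfolding split_val_def
  proof (rule the_equality)
    show "\<forall>v\<in>split_U d A As th ths i. ?M *\<^sub>v v = phi i \<cdot>\<^sub>v v"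
    proof
      fix v assume "v \<in> split_U d A As th ths i"
      then obtain a where v: "v = a \<cdot>\<^sub>v u i" using split_U_eq_span[OF i(2)] by blast
      have "?M *\<^sub>v (a \<cdot>\<^sub>v u i) = a \<cdot>\<^sub>v (?M *\<^sub>v u i)" by (rule mult_mat_vec[OF M u_carrier])
      also have "\<dots> = phi i \<cdot>\<^sub>v (a \<cdot>\<^sub>v u i)"
        unfolding split_mat_mult_u[OF i] by (simp only: smult_smult_assoc mult.commute)
      finally show "?M *\<^sub>v v = phi i \<cdot>\<^sub>v v" unfolding v .
    qed
  next
    fix c assume c: "\<forall>v\<in>split_U d A As th ths i. ?M *\<^sub>v v = c \<cdot>\<^sub>v v"
    have "c \<cdot>\<^sub>v u i = phi i \<cdot>\<^sub>v u i"
      using bspec[OF c u_in_split_U[OF i(2)], symmetric] split_mat_mult_u[OF i] by (rule trans)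
    then show "c = phi i" by (rule smult_vec_right_cancel[OF _ u_carrier U.basis_nonzero]) (use i in simp)
  qed
qed

lemma Y_coord_u_step:
  assumes "Suc k \<le> d" "i \<le> d"
  shows "(ths i - ths (Suc k)) * Y.coord i (u (Suc k)) = phi (Suc k) * Y.coord i (u k)"
proof -
  have "ths i * Y.coord i (u (Suc k)) = Y.coord i (As *\<^sub>v u (Suc k))"
    using assms by (simp add: Y.coord_mult_A del: split_vec.simps)
  also have "\<dots> = ths (Suc k) * Y.coord i (u (Suc k)) + phi (Suc k) * Y.coord i (u k)"
    using assms As_mult_u[of "Suc k"] by (simp add: Y.coord_add Y.coord_smult del: split_vec.simps)
  finally show ?thesis by (simp add: algebra_simps)
qed

lemma Y_coord_u_prod:
  assumes "i \<le> k" "k \<le> d"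
  shows "Y.coord i (u k) * (\<Prod>h\<in>{i<..k}. ths i - ths h) = subdiag_prod i * (\<Prod>h\<in>{i<..k}. phi h)"
  using assms
proof (induction k)
  case 0
  then show ?case using Y_coord_u_diag[of 0] by simp
next
  case (Suc k)
  show ?case
  proof (cases "i = Suc k")
    case True
    then show ?thesis using Y_coord_u_diag[of "Suc k"] Suc.prems by (simp del: split_vec.simps)
  next
    case False
    then have ik: "i \<le> k" and S: "{i<..Suc k} = insert (Suc k) {i<..k}" using Suc.prems by auto
    have "Y.coord i (u (Suc k)) * (\<Prod>h\<in>{i<..Suc k}. ths i - ths h)
      = ((ths i - ths (Suc k)) * Y.coord i (u (Suc k))) * (\<Prod>h\<in>{i<..k}. ths i - ths h)"
      unfolding S by (simp add: algebra_simps)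
    also have "\<dots> = phi (Suc k) * (Y.coord i (u k) * (\<Prod>h\<in>{i<..k}. ths i - ths h))"
      using Y_coord_u_step Suc.prems by (simp del: split_vec.simps)
    also have "\<dots> = subdiag_prod i * (\<Prod>h\<in>{i<..Suc k}. phi h)"
      using Suc.IH[OF ik] Suc.prems unfolding S by (simp add: algebra_simps)
    finally show ?thesis .
  qed
qed

lemma u_last: "u d = X.coord d (u d) \<cdot>\<^sub>v X.eigvec d"
proof (rule X.eq_by_coord)
  fix j assume j: "j < Suc d"
  then show "X.coord j (u d) = X.coord j (X.coord d (u d) \<cdot>\<^sub>v X.eigvec d)"
    using X_coord_u_below[of j d] X.coord_eigvec[of j d] by (cases "j = d") (auto simp: X.coord_smult)
qed simp_all

lemma Y_coord_eigvec_last: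
  assumes i: "i \<le> d"
  shows "Y.coord i (X.eigvec d)
    = subdiag_prod i * (\<Prod>h\<in>{i<..d}. phi h) / (X.coord d (u d) * eta_star d ths (d - i) (ths i))"
proof -
  have "Y.coord i (u d) = Y.coord i (X.coord d (u d) \<cdot>\<^sub>v X.eigvec d)"
    using u_last by (rule arg_cong)
  also have "\<dots> = X.coord d (u d) * Y.coord i (X.eigvec d)"
    using i by (intro Y.coord_smult) auto
  finally have "Y.coord i (u d) = X.coord d (u d) * Y.coord i (X.eigvec d)" .
  then show ?thesis
    using Y_coord_u_prod[OF i order_refl] X_coord_u_diag_nonzero[of d] Y.eta_star_nonzero[OF i]
    by (simp add: Y.eta_star_eq_prod[OF i] field_simps)
qed

lemma U_coord_eigvec_step:
  assumes "Suc k \<le> d" "i \<le> d"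
  shows "U.coord (Suc k) (Y.eigvec i) * phi (Suc k) = (ths i - ths k) * U.coord k (Y.eigvec i)"
proof -
  have "ths i * U.coord k (Y.eigvec i) = U.coord k (As *\<^sub>v Y.eigvec i)"
    using assms by (simp add: Y.eigvec(3) U.coord_smult)
  also have "\<dots> = ths k * U.coord k (Y.eigvec i) + phi (Suc k) * U.coord (Suc k) (Y.eigvec i)"
    using assms by (intro U_coord_As) auto
  finally show ?thesis by (simp add: algebra_simps)
qed

lemma U_coord_eigvec_prod:
  assumes "m \<le> d" "i \<le> d"
  shows "U.coord m (Y.eigvec i) * (\<Prod>h\<in>{1..m}. phi h) = U.coord 0 (Y.eigvec i) * tau_star ths m (ths i)"
  using assms
proof (induction m)
  case 0
  then show ?case by (simp add: tau_star_def)
next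
  case (Suc m)
  have "U.coord (Suc m) (Y.eigvec i) * (\<Prod>h\<in>{1..Suc m}. phi h)
      = (U.coord (Suc m) (Y.eigvec i) * phi (Suc m)) * (\<Prod>h\<in>{1..m}. phi h)"
    by (simp add: prod.nat_ivl_Suc' algebra_simps)
  also have "\<dots> = (ths i - ths m) * (U.coord m (Y.eigvec i) * (\<Prod>h\<in>{1..m}. phi h))"
    using U_coord_eigvec_step Suc.prems by simp
  also have "\<dots> = U.coord 0 (Y.eigvec i) * tau_star ths (Suc m) (ths i)"
    using Suc by (simp add: tau_star_def algebra_simps)
  finally show ?case .
qed

lemma U_coord_eigvec_diag:
  assumes i: "i \<le> d"
  shows "U.coord i (Y.eigvec i) * subdiag_prod i = 1"
proof -
  have "1 = Y.coord i (Y.eigvec i)" using Y.coord_eigvec[OF i i] by simp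
  also have "\<dots> = Y.coord i (lin_comb (Suc d) u (\<lambda>m. U.coord m (Y.eigvec i)) {..<Suc d})"
    by (rule arg_cong[OF U.coord_expansion]) (use i in simp)
  also have "\<dots> = (\<Sum>m<Suc d. U.coord m (Y.eigvec i) * Y.coord i (u m))"
    using i by (intro Y.coord_lin_comb) auto
  also have "\<dots> = (\<Sum>m<Suc d. if m = i then U.coord i (Y.eigvec i) * subdiag_prod i else 0)"
  proof (rule sum.cong)
    fix m assume m: "m \<in> {..<Suc d}"
    have "U.coord m (Y.eigvec i) = 0" if "i < m"
      using that i m Y.coord_eigvec[of _ i] by (intro U_coord_zero_above[of _ "Suc i"]) auto
    then show "U.coord m (Y.eigvec i) * Y.coord i (u m) = (if m = i then U.coord i (Y.eigvec i) * subdiag_prod i else 0)"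
      using i Y_coord_u_diag Y_coord_u_above[of m i] by (cases "m < i"; cases "m = i") auto
  qed simp
  also have "\<dots> = U.coord i (Y.eigvec i) * subdiag_prod i" using i by (subst sum.delta) auto
  finally show ?thesis by simp
qed

lemma X_coord_0_eigvec:
  assumes i: "i \<le> d"
  shows "X.coord 0 (Y.eigvec i)
    = (\<Prod>h\<in>{1..i}. phi h) * X.coord 0 (Y.eigvec 0) / (subdiag_prod i * tau_star ths i (ths i))"
proof -
  have "X.coord 0 (Y.eigvec i) = X.coord 0 (lin_comb (Suc d) u (\<lambda>m. U.coord m (Y.eigvec i)) {..<Suc d})"
    by (rule arg_cong[OF U.coord_expansion]) (use i in simp)
  also have "\<dots> = (\<Sum>m<Suc d. U.coord m (Y.eigvec i) * X.coord 0 (u m))"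
    by (intro X.coord_lin_comb) auto
  also have "\<dots> = U.coord 0 (Y.eigvec i) * X.coord 0 (Y.eigvec 0)"
    by (subst sum.mono_neutral_right[of _ "{0}"]) (auto simp: X_coord_u_below)
  moreover have "U.coord 0 (Y.eigvec i) * (subdiag_prod i * tau_star ths i (ths i)) = (\<Prod>h\<in>{1..i}. phi h)"
  proof -
    have "U.coord 0 (Y.eigvec i) * (subdiag_prod i * tau_star ths i (ths i))
        = (\<Prod>h\<in>{1..i}. phi h) * (U.coord i (Y.eigvec i) * subdiag_prod i)"
      using U_coord_eigvec_prod[OF i i] by (simp add: algebra_simps)
    then show ?thesis using U_coord_eigvec_diag[OF i] by simp
  qed
  ultimately show ?thesis
    using subdiag_prod_nonzero[OF i] Y.tau_star_nonzero[OF i] by (simp add: field_simps)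
qed

lemma nu_mtrace_eq_coord_ratio:
  assumes "i \<le> d"
  shows "nu_LS d A As th ths * mtrace (Y.E i * X.E 0)
    = Y.coord i (X.eigvec 0) * X.coord 0 (Y.eigvec i) / (X.coord 0 (Y.eigvec 0) * Y.coord 0 (X.eigvec 0))"
  using mtrace_prim_idem_mult[OF X.eigen_ordered_axioms Y.eigen_ordered_axioms assms le0]
    mtrace_prim_idem_mult[OF Y.eigen_ordered_axioms X.eigen_ordered_axioms le0 le0]
  by (simp add: nu_LS_def)

end

section \<open>Reversing the order of the eigenvalues\<close>

context eigen_ordered
begin

lemma eigen_ordered_rev: "eigen_ordered d A (\<lambda>j. th (d - j))"
proof
  have "inj_on (\<lambda>j. th (d - j)) {..d}"
    using th_eq_iff by (auto simp: inj_on_def)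
  moreover have "(\<lambda>j. th (d - j)) ` {..d} = th ` {..d}"
  proof
    show "th ` {..d} \<subseteq> (\<lambda>j. th (d - j)) ` {..d}"
    proof
      fix z assume "z \<in> th ` {..d}"
      then obtain k where "k \<le> d" "z = th k" by auto
      then have "z = th (d - (d - k))" by simp
      then show "z \<in> (\<lambda>j. th (d - j)) ` {..d}" by auto
    qed
  qed auto
  ultimately show "eigen_ordering d A (\<lambda>j. th (d - j))"
    using ordering unfolding eigen_ordering_def by simp
qed (rule mult_free)

lemma prim_idem_rev:
  assumes i: "i \<le> d"
  shows "prim_idem d A (\<lambda>j. th (d - j)) i = E (d - i)"
proof -
  interpret R: eigen_ordered d A "\<lambda>j. th (d - j)" by (rule eigen_ordered_rev)
  show ?thesis
  proof (rule mat_eq_on_basis[OF R.prim_idem_carrier prim_idem_carrier])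
    fix k assume "k < Suc d"
    then have k: "k \<le> d" by simp
    have "prim_idem d A (\<lambda>j. th (d - j)) i *\<^sub>v eigvec k
      = (\<Prod>j\<in>{..d} - {i}. (th k - th (d - j)) / (th (d - i) - th (d - j))) \<cdot>\<^sub>v eigvec k"
      by (rule R.prim_idem_mult_eigenvector(2)[OF eigvec(1,3)[OF k]])
    also have "\<dots> = (if k = d - i then eigvec k else 0\<^sub>v (Suc d))"
    proof (cases "k = d - i")
      case True
      then have "(\<Prod>j\<in>{..d} - {i}. (th k - th (d - j)) / (th (d - i) - th (d - j))) = 1"
        using i th_eq_iff[of "d - i" "d - _"] by (intro prod.neutral) auto
      then show ?thesis using True by simp
    next
      case False
      then have "(\<Prod>j\<in>{..d} - {i}. (th k - th (d - j)) / (th (d - i) - th (d - j))) = 0"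
        using k i by (intro prod_zero bexI[of _ "d - k"]) auto
      then show ?thesis using False k by (auto intro!: eq_vecI)
    qed
    also have "\<dots> = E (d - i) *\<^sub>v eigvec k" using prim_idem_mult_eigvec[of "d - i" k] k by auto
    finally show "prim_idem d A (\<lambda>j. th (d - j)) i *\<^sub>v eigvec k = E (d - i) *\<^sub>v eigvec k" .
  qed
qed

end

lemma leonard_system_rev:
  assumes ls: "leonard_system d A As th ths"
  shows "leonard_system d A As (\<lambda>j. th (d - j)) ths"
proof -
  interpret leonard d A As th ths by (rule leonard.intro[OF ls])
  show ?thesis
    unfolding leonard_system_def
  proof (intro conjI allI impI)
    show "multiplicity_free d A" "multiplicity_free d As" "eigen_ordering d As ths"
      using ls unfolding leonard_system_def by auto
    show "eigen_ordering d A (\<lambda>j. th (d - j))"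
      using X.eigen_ordered_rev unfolding eigen_ordered_def by simp
  next
    fix i j assume i: "i \<le> d" and j: "j \<le> d"
    have rev: "prim_idem d A (\<lambda>j. th (d - j)) i * As * prim_idem d A (\<lambda>j. th (d - j)) j = X.E (d - i) * As * X.E (d - j)"
      using X.prim_idem_rev i j by simp
    have "(Suc (d - i) < d - j \<or> Suc (d - j) < d - i \<longrightarrow> X.E (d - i) * As * X.E (d - j) = 0\<^sub>m (Suc d) (Suc d))
      \<and> (Suc (d - i) = d - j \<or> Suc (d - j) = d - i \<longrightarrow> X.E (d - i) * As * X.E (d - j) \<noteq> 0\<^sub>m (Suc d) (Suc d))"
      using ls diff_le_self[of d i] diff_le_self[of d j] unfolding leonard_system_def by blast
    moreover have "Suc i < j \<or> Suc j < i \<longleftrightarrow> Suc (d - i) < d - j \<or> Suc (d - j) < d - i"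
      "Suc i = j \<or> Suc j = i \<longleftrightarrow> Suc (d - i) = d - j \<or> Suc (d - j) = d - i"
      using i j by presburger+
    ultimately show
      "Suc i < j \<or> Suc j < i \<Longrightarrow> prim_idem d A (\<lambda>j. th (d - j)) i * As * prim_idem d A (\<lambda>j. th (d - j)) j = 0\<^sub>m (Suc d) (Suc d)"
      "Suc i = j \<or> Suc j = i \<Longrightarrow> prim_idem d A (\<lambda>j. th (d - j)) i * As * prim_idem d A (\<lambda>j. th (d - j)) j \<noteq> 0\<^sub>m (Suc d) (Suc d)"
      unfolding rev by blast+
    show "Suc i < j \<or> Suc j < i \<Longrightarrow> Y.E i * A * Y.E j = 0\<^sub>m (Suc d) (Suc d)"
      "Suc i = j \<or> Suc j = i \<Longrightarrow> Y.E i * A * Y.E j \<noteq> 0\<^sub>m (Suc d) (Suc d)"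
      using ls i j unfolding leonard_system_def by blast+
  qed
qed

theorem theorem23p8:
  fixes d :: nat and A As :: "'a::field mat" and th ths :: "nat \<Rightarrow> 'a" and i :: nat
  assumes "leonard_system d A As th ths"
    and "i \<le> d"
  shows "nu_LS d A As th ths * mtrace (prim_idem d As ths i * prim_idem d A th 0) =
     (\<Prod>h\<in>{1..i}. first_split d A As th ths h) / (\<Prod>h\<in>{1..i}. second_split d A As th ths h) *
     (eta_star d ths d (ths 0) / (tau_star ths i (ths i) * eta_star d ths (d - i) (ths i)))"
proof -
  interpret L: leonard d A As th ths by (rule leonard.intro) fact
  interpret R: leonard d A As "\<lambda>j. th (d - j)" ths by (rule leonard.intro, rule leonard_system_rev) fact
  have i: "i \<le> d" by fact
  have x0: "R.X.eigvec d = L.X.eigvec 0" by simp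
  have split_seqs: "(\<Prod>h\<in>{1..i}. first_split d A As th ths h) = (\<Prod>h\<in>{1..i}. L.phi h)"
    "(\<Prod>h\<in>{1..i}. second_split d A As th ths h) = (\<Prod>h\<in>{1..i}. R.phi h)"
    using i by (auto simp: first_split_def second_split_def L.split_val_eq_phi R.split_val_eq_phi
        intro!: prod.cong)
  have R_phis: "(\<Prod>h\<in>{0<..d}. R.phi h) = (\<Prod>h\<in>{1..i}. R.phi h) * (\<Prod>h\<in>{i<..d}. R.phi h)"
    using i by (subst prod.union_disjoint[symmetric]) (auto intro!: prod.cong)
  have "(\<Prod>h\<in>{1..i}. R.phi h) \<noteq> 0" "(\<Prod>h\<in>{i<..d}. R.phi h) \<noteq> 0"
    using i R.phi_nonzero by auto
  then show ?thesis
    unfolding L.nu_mtrace_eq_coord_ratio[OF i] split_seqs L.X_coord_0_eigvec[OF i]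
      R.Y_coord_eigvec_last[OF i, unfolded x0] R.Y_coord_eigvec_last[OF le0, unfolded x0 R_phis]
    using L.X_coord_y0_nonzero[of 0] L.subdiag_prod_nonzero[OF i] R.X_coord_u_diag_nonzero[of d]
      L.Y.tau_star_nonzero[OF i] L.Y.eta_star_nonzero[OF i] L.Y.eta_star_nonzero[of 0]
    by (simp add: field_simps)
qed

end
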